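(* For each prime power $n$, let $U_n$ be the vertex-face transition matrix of a circular self-dual orientably-regular embedding of $K_n$. Then the family of discrete quantum walks determined by $\{U_n : n \text{ a prime power}\}$ is sedentary.
   Context: Setting. A circular embedding is a cellular embedding on an orientable surface in which every face is bounded by a cycle. It is self-dual if it is isomorphic to its dual. It is orientably-regular if its group of orientation-preserving automorphisms acts regularly on the arcs (ordered pairs $(u,v)$ with $\{u,v\}$ an edge). Vertex-face transition matrix. Fix a consistent orientation of the faces (each shared edge receives opposite directions in its two faces). Let $M$ be the arc-face incidence matrix and $N$ the arc-tail incidence matrix, and $\widehat M,\widehat N$ these with columns scaled to unit length. Then $U=(2\widehat M\widehat M^T-I)(2\widehat N\widehat N^T-I)$. Sedentary. A sequence of discrete quantum walks with transition matrices $U_1,U_2,\dots$ is sedentary if, for every fixed positive integer $t$, the mixing matrices $U_n^t\circ\overline{U_n^t}$ (where $\circ$ is the entrywise product) converge to the identity as $n\to\infty$, i.e. $\max_{a,b}|(U_n^t\circ\overline{U_n^t}-I)_{a,b}|\to0$. *)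

theory Defs
  imports Complex_Main "HOL-Number_Theory.Prime_Powers"
begin

definition arcs :: "nat \<Rightarrow> (nat \<times> nat) set" where
  "arcs n = {(u,v). u < n \<and> v < n \<and> u \<noteq> v}"

definition tail :: "nat \<times> nat \<Rightarrow> nat" where "tail a = fst a"
definition rev_arc :: "nat \<times> nat \<Rightarrow> nat \<times> nat" where "rev_arc a = (snd a, fst a)"

text \<open>Rotation systems of a connected graph are exactly the
  cellular embeddings on orientable surfaces (Heffter-Edmonds).\<close>

definition rotation_system :: "nat \<Rightarrow> (nat \<Rightarrow> nat \<Rightarrow> nat) \<Rightarrow> bool" where
  "rotation_system n r \<longleftrightarrow>
     (\<forall>u<n. bij_betw (r u) ({..<n} - {u}) ({..<n} - {u}) \<and>
            (\<forall>v \<in> {..<n} - {u}. \<forall>w \<in> {..<n} - {u}. \<exists>k. (r u ^^ k) v = w))"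

definition rot :: "(nat \<Rightarrow> nat \<Rightarrow> nat) \<Rightarrow> nat \<times> nat \<Rightarrow> nat \<times> nat" where
  "rot r a = (fst a, r (fst a) (snd a))"

definition face_succ :: "(nat \<Rightarrow> nat \<Rightarrow> nat) \<Rightarrow> nat \<times> nat \<Rightarrow> nat \<times> nat" where
  "face_succ r a = rot r (rev_arc a)"

definition face_of :: "(nat \<Rightarrow> nat \<Rightarrow> nat) \<Rightarrow> nat \<times> nat \<Rightarrow> (nat \<times> nat) set" where
  "face_of r a = {(face_succ r ^^ k) a | k. True}"

definition faces :: "nat \<Rightarrow> (nat \<Rightarrow> nat \<Rightarrow> nat) \<Rightarrow> (nat \<times> nat) set set" where
  "faces n r = face_of r ` arcs n"

text \<open>Circular: every facial walk is a cycle, i.e. it has length at least 3 and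
  passes through pairwise distinct vertices.\<close>

definition circular :: "nat \<Rightarrow> (nat \<Rightarrow> nat \<Rightarrow> nat) \<Rightarrow> bool" where
  "circular n r \<longleftrightarrow> (\<forall>a \<in> arcs n. inj_on tail (face_of r a) \<and> card (face_of r a) \<ge> 3)"

definition orient_aut :: "nat \<Rightarrow> (nat \<Rightarrow> nat \<Rightarrow> nat) \<Rightarrow> (nat \<Rightarrow> nat) \<Rightarrow> bool" where
  "orient_aut n r g \<longleftrightarrow>
     bij_betw g {..<n} {..<n} \<and> (\<forall>x. x \<ge> n \<longrightarrow> g x = x) \<and>
     (\<forall>u<n. \<forall>v<n. u \<noteq> v \<longrightarrow> r (g u) (g v) = g (r u v))"

definition orientably_regular :: "nat \<Rightarrow> (nat \<Rightarrow> nat \<Rightarrow> nat) \<Rightarrow> bool" where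
  "orientably_regular n r \<longleftrightarrow>
     (\<forall>a \<in> arcs n. \<forall>b \<in> arcs n. \<exists>!g. orient_aut n r g \<and> (g (fst a), g (snd a)) = b)"

text \<open>The map is (arcs, rev_arc, rot r); its dual is (arcs, rev_arc, face_succ r).
  Self-dual: there is a dart bijection h commuting with rev_arc that carries rot r to
  face_succ r (orientation-preserving isomorphism) or to its inverse (orientation-reversing
  isomorphism).\<close>

definition self_dual :: "nat \<Rightarrow> (nat \<Rightarrow> nat \<Rightarrow> nat) \<Rightarrow> bool" where
  "self_dual n r \<longleftrightarrow>
     (\<exists>h. bij_betw h (arcs n) (arcs n) \<and>
          (\<forall>a \<in> arcs n. h (rev_arc a) = rev_arc (h a)) \<and>
          ((\<forall>a \<in> arcs n. h (rot r a) = face_succ r (h a)) \<or>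
           (\<forall>a \<in> arcs n. face_succ r (h (rot r a)) = h a)))"

type_synonym ('i,'j) cmat = "'i \<Rightarrow> 'j \<Rightarrow> complex"

definition mmult :: "'j set \<Rightarrow> ('i,'j) cmat \<Rightarrow> ('j,'k) cmat \<Rightarrow> ('i,'k) cmat" where
  "mmult J A B = (\<lambda>i k. \<Sum>j\<in>J. A i j * B j k)"

definition mtrans :: "('i,'j) cmat \<Rightarrow> ('j,'i) cmat" where
  "mtrans A = (\<lambda>j i. A i j)"

definition idm :: "('i,'i) cmat" where
  "idm = (\<lambda>i j. if i = j then 1 else 0)"

definition colnormalize :: "'i set \<Rightarrow> ('i,'j) cmat \<Rightarrow> ('i,'j) cmat" where
  "colnormalize I A = (\<lambda>i j. A i j / complex_of_real (sqrt (\<Sum>i'\<in>I. (cmod (A i' j))\<^sup>2)))"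

fun mpow :: "'i set \<Rightarrow> ('i,'i) cmat \<Rightarrow> nat \<Rightarrow> ('i,'i) cmat" where
  "mpow I A 0 = idm"
| "mpow I A (Suc t) = mmult I (mpow I A t) A"

definition arc_face_matrix :: "(nat \<Rightarrow> nat \<Rightarrow> nat) \<Rightarrow> (nat \<times> nat, (nat \<times> nat) set) cmat" where
  "arc_face_matrix r = (\<lambda>a F. if a \<in> F then 1 else 0)"

definition arc_tail_matrix :: "(nat \<times> nat, nat) cmat" where
  "arc_tail_matrix = (\<lambda>a v. if tail a = v then 1 else 0)"

definition vf_transition :: "nat \<Rightarrow> (nat \<Rightarrow> nat \<Rightarrow> nat) \<Rightarrow> (nat \<times> nat, nat \<times> nat) cmat" where
  "vf_transition n r =
     (let Mh = colnormalize (arcs n) (arc_face_matrix r);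
          Nh = colnormalize (arcs n) arc_tail_matrix;
          RM = (\<lambda>a b. 2 * mmult (faces n r) Mh (mtrans Mh) a b - idm a b);
          RN = (\<lambda>a b. 2 * mmult {..<n} Nh (mtrans Nh) a b - idm a b)
      in mmult (arcs n) RM RN)"

definition mixing :: "nat \<Rightarrow> (nat \<Rightarrow> nat \<Rightarrow> nat) \<Rightarrow> nat \<Rightarrow> (nat \<times> nat, nat \<times> nat) cmat" where
  "mixing n r t = (let P = mpow (arcs n) (vf_transition n r) t in (\<lambda>a b. P a b * cnj (P a b)))"

end

theory Submission
  imports Defs
begin

text \<open>Self-duality carries the rotation at each vertex of K_n to a facial walk, so every
  face, like every vertex star, consists of n - 1 arcs. Both factors of U are therefore
  reflections 2P - I in which P averages over blocks of n - 1 arcs: the entries of P are at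
  most 1/(n - 1) and its absolute column sums are 1. Hence U - I = 4PQ - 2P - 2Q has entries
  at most 8/(n - 1) while the absolute column sums of U are at most 9, which by induction gives
  entries at most 10^t 8/(n - 1) for U^t - I, and the mixing matrix of U^t is within three
  times that of the identity.\<close>

definition entry_bounded :: "'i set \<Rightarrow> ('i,'i) cmat \<Rightarrow> real \<Rightarrow> bool" where
  "entry_bounded S M e \<longleftrightarrow> (\<forall>a\<in>S. \<forall>b\<in>S. cmod (M a b) \<le> e)"

definition col_sum_bounded :: "'i set \<Rightarrow> ('i,'i) cmat \<Rightarrow> real \<Rightarrow> bool" where
  "col_sum_bounded S M K \<longleftrightarrow> (\<forall>b\<in>S. (\<Sum>c\<in>S. cmod (M c b)) \<le> K)"

definition reflection :: "('i,'i) cmat \<Rightarrow> ('i,'i) cmat" where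
  "reflection P = (\<lambda>a b. 2 * P a b - idm a b)"

lemma entry_bounded_mmult:
  assumes "entry_bounded S D e" "col_sum_bounded S U K" "e \<ge> 0"
  shows "entry_bounded S (mmult S D U) (e * K)"
  unfolding entry_bounded_def
proof (intro ballI)
  fix a b assume a: "a \<in> S" and b: "b \<in> S"
  have "cmod (mmult S D U a b) \<le> (\<Sum>c\<in>S. cmod (D a c) * cmod (U c b))"
    unfolding mmult_def by (rule order_trans[OF norm_sum]) (simp add: norm_mult)
  also have "\<dots> \<le> (\<Sum>c\<in>S. e * cmod (U c b))"
    using assms(1) a by (intro sum_mono mult_right_mono) (auto simp: entry_bounded_def)
  also have "\<dots> = e * (\<Sum>c\<in>S. cmod (U c b))" by (simp add: sum_distrib_left)
  also have "\<dots> \<le> e * K"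
    using assms(2,3) b by (intro mult_left_mono) (auto simp: col_sum_bounded_def)
  finally show "cmod (mmult S D U a b) \<le> e * K" .
qed

lemma col_sum_bounded_mmult:
  assumes "col_sum_bounded S A KA" "col_sum_bounded S B KB" "KA \<ge> 0"
  shows "col_sum_bounded S (mmult S A B) (KA * KB)"
  unfolding col_sum_bounded_def
proof
  fix b assume b: "b \<in> S"
  have "(\<Sum>c\<in>S. cmod (mmult S A B c b)) \<le> (\<Sum>c\<in>S. \<Sum>d\<in>S. cmod (A c d) * cmod (B d b))"
    unfolding mmult_def by (intro sum_mono, rule order_trans[OF norm_sum]) (simp add: norm_mult)
  also have "\<dots> = (\<Sum>d\<in>S. (\<Sum>c\<in>S. cmod (A c d)) * cmod (B d b))"
    by (subst sum.swap) (simp add: sum_distrib_right)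
  also have "\<dots> \<le> (\<Sum>d\<in>S. KA * cmod (B d b))"
    using assms(1) by (intro sum_mono mult_right_mono) (auto simp: col_sum_bounded_def)
  also have "\<dots> = KA * (\<Sum>d\<in>S. cmod (B d b))" by (simp add: sum_distrib_left)
  also have "\<dots> \<le> KA * KB"
    using assms(2,3) b by (intro mult_left_mono) (auto simp: col_sum_bounded_def)
  finally show "(\<Sum>c\<in>S. cmod (mmult S A B c b)) \<le> KA * KB" .
qed

lemma sum_idm_left: "finite S \<Longrightarrow> a \<in> S \<Longrightarrow> (\<Sum>c\<in>S. idm a c * f c) = f a"
  by (simp add: idm_def if_distrib[of "\<lambda>x. x * _"] cong: if_cong)

lemma sum_idm_right: "finite S \<Longrightarrow> b \<in> S \<Longrightarrow> (\<Sum>c\<in>S. f c * idm c b) = f b"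
  by (simp add: idm_def if_distrib[of "\<lambda>x. _ * x"] cong: if_cong)

lemma col_sum_bounded_reflection:
  assumes "finite S" "col_sum_bounded S P K"
  shows "col_sum_bounded S (reflection P) (2 * K + 1)"
  unfolding col_sum_bounded_def
proof
  fix b assume b: "b \<in> S"
  have "(\<Sum>c\<in>S. cmod (reflection P c b)) \<le> (\<Sum>c\<in>S. 2 * cmod (P c b) + cmod (idm c b))"
    unfolding reflection_def by (intro sum_mono) (metis norm_triangle_ineq4 norm_mult norm_numeral)
  also have "\<dots> = 2 * (\<Sum>c\<in>S. cmod (P c b)) + (\<Sum>c\<in>S. cmod (idm c b))"
    by (simp add: sum.distrib sum_distrib_left)
  moreover have "(\<Sum>c\<in>S. cmod (idm c b)) = 1"
    using assms(1) b by (simp add: idm_def if_distrib[of cmod] cong: if_cong)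
  moreover have "(\<Sum>c\<in>S. cmod (P c b)) \<le> K"
    using assms(2) b by (simp add: col_sum_bounded_def)
  ultimately show "(\<Sum>c\<in>S. cmod (reflection P c b)) \<le> 2 * K + 1"
    by linarith
qed

lemma mmult_reflection_reflection:
  assumes "finite S" "a \<in> S" "b \<in> S"
  shows "mmult S (reflection P) (reflection Q) a b
     = 4 * mmult S P Q a b - 2 * P a b - 2 * Q a b + idm a b"
proof -
  have "mmult S (reflection P) (reflection Q) a b
    = (\<Sum>c\<in>S. 4 * (P a c * Q c b) - 2 * (P a c * idm c b) - 2 * (idm a c * Q c b) + idm a c * idm c b)"
    unfolding mmult_def reflection_def by (intro sum.cong) (auto simp: algebra_simps)
  also have "\<dots> = 4 * mmult S P Q a b - 2 * P a b - 2 * Q a b + idm a b"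
    using assms by (simp add: sum.distrib sum_subtractf sum_idm_left sum_idm_right mmult_def
        flip: sum_distrib_left)
  finally show ?thesis .
qed

lemma entry_bounded_reflections_minus_idm:
  assumes "finite S" "entry_bounded S P \<delta>" "entry_bounded S Q \<delta>" "col_sum_bounded S Q 1"
  shows "entry_bounded S (\<lambda>a b. mmult S (reflection P) (reflection Q) a b - idm a b) (8 * \<delta>)"
  unfolding entry_bounded_def
proof (intro ballI)
  fix a b assume a: "a \<in> S" and b: "b \<in> S"
  have "\<delta> \<ge> 0" using assms(2) a by (auto simp: entry_bounded_def intro: order_trans[OF norm_ge_zero])
  then have PQ: "cmod (mmult S P Q a b) \<le> \<delta>"
    using entry_bounded_mmult[OF assms(2,4)] a b by (auto simp: entry_bounded_def)
  have "cmod (mmult S (reflection P) (reflection Q) a b - idm a b)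
        = cmod (4 * mmult S P Q a b - 2 * P a b - 2 * Q a b)"
    using mmult_reflection_reflection[OF assms(1) a b] by simp
  also have "\<dots> \<le> cmod (4 * mmult S P Q a b) + cmod (2 * P a b) + cmod (2 * Q a b)"
    by (rule order_trans[OF norm_triangle_ineq4 add_right_mono[OF norm_triangle_ineq4]])
  also have "\<dots> = 4 * cmod (mmult S P Q a b) + 2 * cmod (P a b) + 2 * cmod (Q a b)"
    by (simp add: norm_mult)
  also have "\<dots> \<le> 8 * \<delta>"
    using PQ assms(2,3) a b unfolding entry_bounded_def by (smt (verit, best))
  finally show "cmod (mmult S (reflection P) (reflection Q) a b - idm a b) \<le> 8 * \<delta>" .
qed

lemma entry_bounded_mpow_minus_idm:
  assumes fS: "finite S" and U: "col_sum_bounded S U K" "K \<ge> 0"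
    and \<delta>: "entry_bounded S (\<lambda>a b. U a b - idm a b) \<delta>" "\<delta> \<ge> 0"
  shows "entry_bounded S (\<lambda>a b. mpow S U t a b - idm a b) ((K + 1) ^ t * \<delta>)"
proof (induction t)
  case 0 then show ?case using \<delta>(2) by (simp add: entry_bounded_def)
next
  case (Suc t)
  let ?D = "\<lambda>a b. mpow S U t a b - idm a b"
  have DU: "entry_bounded S (mmult S ?D U) ((K + 1) ^ t * \<delta> * K)"
    using entry_bounded_mmult[OF Suc U(1)] U(2) \<delta>(2) by simp
  show ?case unfolding entry_bounded_def
  proof (intro ballI)
    fix a b assume a: "a \<in> S" and b: "b \<in> S"
    have "mpow S U (Suc t) a b - idm a b = mmult S ?D U a b + (U a b - idm a b)"
      using fS a by (simp add: mmult_def algebra_simps sum.distrib sum_subtractf sum_idm_left)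
    also have "cmod \<dots> \<le> (K + 1) ^ t * \<delta> * K + \<delta>"
      using DU \<delta>(1) a b by (intro order_trans[OF norm_triangle_ineq] add_mono)
        (auto simp: entry_bounded_def)
    also have "\<dots> \<le> (K + 1) ^ Suc t * \<delta>"
      using \<delta>(2) U(2) mult_left_mono[OF one_le_power[of "K + 1" t] \<delta>(2)]
    by (simp add: algebra_simps)
    finally show "cmod (mpow S U (Suc t) a b - idm a b) \<le> (K + 1) ^ Suc t * \<delta>" .
  qed
qed

lemma norm_mult_cnj_minus_idm:
  fixes x :: complex
  assumes "cmod (x - idm a b) \<le> d" "d \<le> 1"
  shows "cmod (x * cnj x - idm a b) \<le> 3 * d"
proof (cases "a = b")
  case True
  then have h: "cmod (x - 1) \<le> d" using assms by (simp add: idm_def)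
  have x: "x * cnj x - 1 = of_real ((cmod x - 1) * (cmod x + 1))"
    by (simp add: complex_norm_square[symmetric] algebra_simps power2_eq_square)
  have "cmod (x * cnj x - 1) = \<bar>cmod x - 1\<bar> * (cmod x + 1)"
    unfolding x norm_of_real abs_mult by simp
  also have "\<dots> \<le> d * 3"
    using h norm_triangle_ineq3[of x 1] norm_triangle_ineq2[of x 1] assms(2)
    by (intro mult_mono) auto
  finally show ?thesis using True by (simp add: idm_def)
next
  case False
  then have h: "cmod x \<le> d" using assms by (simp add: idm_def)
  have "d \<ge> 0" using h norm_ge_zero order_trans by blast
  have "cmod (x * cnj x) = cmod x * cmod x" by (simp add: norm_mult)
  also have "\<dots> \<le> d * 1"
    using h assms(2) \<open>d \<ge> 0\<close> by (intro mult_mono) auto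
  finally show ?thesis
    using False \<open>d \<ge> 0\<close> by (simp add: idm_def)
qed

definition block_incidence :: "('j \<Rightarrow> 'i set) \<Rightarrow> ('i,'j) cmat" where
  "block_incidence X = (\<lambda>a j. if a \<in> X j then 1 else 0)"

definition block_projection :: "'i set \<Rightarrow> 'j set \<Rightarrow> ('j \<Rightarrow> 'i set) \<Rightarrow> ('i,'i) cmat" where
  "block_projection S J X =
     (let Mh = colnormalize S (block_incidence X) in mmult J Mh (mtrans Mh))"

lemma colnormalize_block_incidence:
  assumes "finite S"
  shows "colnormalize S (block_incidence X) a j
       = (if a \<in> X j then 1 / complex_of_real (sqrt (real (card (X j \<inter> S)))) else 0)"
proof -
  have "(\<Sum>i\<in>S. (cmod (block_incidence X i j))\<^sup>2) = (\<Sum>i\<in>S. if i \<in> X j then 1 else 0)"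
    by (intro sum.cong) (auto simp: block_incidence_def)
  also have "\<dots> = real (card (X j \<inter> S))"
    using assms by (simp add: sum.If_cases Int_commute)
  finally show ?thesis by (simp add: colnormalize_def block_incidence_def)
qed

lemma block_projection_eq:
  assumes fS: "finite S" and fJ: "finite J"
    and partition: "\<forall>a\<in>S. \<exists>!j. j \<in> J \<and> a \<in> X j"
    and "a \<in> S" "j \<in> J" "a \<in> X j"
  shows "block_projection S J X a b = (if b \<in> X j then 1 / of_nat (card (X j \<inter> S)) else 0)"
proof -
  let ?Mh = "colnormalize S (block_incidence X)"
  have "block_projection S J X a b = (\<Sum>i\<in>J. ?Mh a i * ?Mh b i)"
    by (simp add: block_projection_def mmult_def mtrans_def Let_def)
  also have "\<dots> = (\<Sum>i\<in>{j}. ?Mh a i * ?Mh b i)"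
    using assms partition
    by (intro sum.mono_neutral_right[OF fJ]) (auto simp: colnormalize_block_incidence[OF fS])
  also have "\<dots> = (if b \<in> X j then 1 / of_nat (card (X j \<inter> S)) else 0)"
    using assms by (simp add: colnormalize_block_incidence[OF fS] flip: of_real_mult)
  finally show ?thesis .
qed

lemma block_projection_bounds:
  assumes fS: "finite S" and fJ: "finite J"
    and partition: "\<forall>a\<in>S. \<exists>!j. j \<in> J \<and> a \<in> X j"
    and large: "m > 0" "\<forall>j\<in>J. m \<le> card (X j \<inter> S)"
  shows "entry_bounded S (block_projection S J X) (1 / real m)"
    and "col_sum_bounded S (block_projection S J X) 1"
proof -
  let ?P = "block_projection S J X"
  note P_eq = block_projection_eq[OF fS fJ partition]
  show "entry_bounded S ?P (1 / real m)"
    unfolding entry_bounded_def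
  proof (intro ballI)
    fix a b assume a: "a \<in> S" and "b \<in> S"
    obtain j where j: "j \<in> J" "a \<in> X j" using partition a by blast
    have "1 / real (card (X j \<inter> S)) \<le> 1 / real m"
      using large j by (intro divide_left_mono) auto
    then show "cmod (?P a b) \<le> 1 / real m"
      using P_eq[OF a j] by (auto simp: norm_divide)
  qed
  show "col_sum_bounded S ?P 1"
    unfolding col_sum_bounded_def
  proof
    fix b assume b: "b \<in> S"
    obtain j where j: "j \<in> J" "b \<in> X j" using partition b by blast
    have "cmod (?P c b) = (if c \<in> X j then 1 / real (card (X j \<inter> S)) else 0)" if c: "c \<in> S" for c
    proof -
      obtain i where i: "i \<in> J" "c \<in> X i" using partition c by blast
      have "b \<in> X i \<longleftrightarrow> c \<in> X j" and "c \<in> X j \<Longrightarrow> i = j"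
        using partition b c i j by blast+
      then show ?thesis using P_eq[OF c i, of b] by (auto simp: norm_divide)
    qed
    then have "(\<Sum>c\<in>S. cmod (?P c b)) = (\<Sum>c\<in>S. if c \<in> X j then 1 / real (card (X j \<inter> S)) else 0)"
      by (intro sum.cong) auto
    also have "\<dots> = 1"
      using fS b j by (simp add: sum.If_cases Int_commute card_gt_0_iff) blast
    finally show "(\<Sum>c\<in>S. cmod (?P c b)) \<le> 1" by simp
  qed
qed

lemma vf_transition_eq:
  "vf_transition n r = mmult (arcs n)
     (reflection (block_projection (arcs n) (faces n r) (\<lambda>F. F)))
     (reflection (block_projection (arcs n) {..<n} (\<lambda>v. {a. tail a = v})))"
  by (simp add: vf_transition_def block_projection_def reflection_def block_incidence_def
      arc_face_matrix_def arc_tail_matrix_def Let_def)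

definition out_arcs :: "nat \<Rightarrow> nat \<Rightarrow> (nat \<times> nat) set" where
  "out_arcs n u = {a \<in> arcs n. fst a = u}"

lemma finite_arcs: "finite (arcs n)"
proof -
  have "arcs n \<subseteq> {..<n} \<times> {..<n}" by (auto simp: arcs_def)
  then show ?thesis by (rule finite_subset) auto
qed

lemma card_out_arcs: "u < n \<Longrightarrow> card (out_arcs n u) = n - 1"
proof -
  assume "u < n"
  then have "out_arcs n u = {u} \<times> ({..<n} - {u})" by (auto simp: out_arcs_def arcs_def)
  then show ?thesis using \<open>u < n\<close> by (simp add: card_cartesian_product_singleton)
qed

lemma rot_funpow: "(rot r ^^ k) (u, v) = (u, (r u ^^ k) v)"
  by (induction k) (auto simp: rot_def)

lemma rot_in_out_arcs:
  assumes "rotation_system n r" "a \<in> out_arcs n u"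
  shows "rot r a \<in> out_arcs n u"
  using assms bij_betw_apply[of "r u" "{..<n} - {u}" "{..<n} - {u}" "snd a"]
  by (auto simp: rotation_system_def out_arcs_def arcs_def rot_def)

lemma rot_surj_on_out_arcs:
  assumes "rotation_system n r" "a \<in> out_arcs n u"
  obtains a' where "a' \<in> out_arcs n u" "rot r a' = a"
proof -
  have u: "u < n" "snd a \<in> {..<n} - {u}" "fst a = u"
    using assms(2) by (auto simp: out_arcs_def arcs_def)
  moreover have "r u ` ({..<n} - {u}) = {..<n} - {u}"
    using assms(1) u(1) unfolding rotation_system_def bij_betw_def by blast
  ultimately have "snd a \<in> r u ` ({..<n} - {u})" by simp
  then obtain v where v: "snd a = r u v" "v \<in> {..<n} - {u}" by (rule imageE)
  have "(u, v) \<in> out_arcs n u" using u(1) v(2) by (auto simp: out_arcs_def arcs_def)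
  moreover have "rot r (u, v) = a" using u(3) v(1) by (simp add: rot_def prod_eq_iff)
  ultimately show ?thesis by (rule that)
qed

lemma rot_transitive_on_out_arcs:
  assumes "rotation_system n r" "a \<in> out_arcs n u" "c \<in> out_arcs n u"
  obtains k where "(rot r ^^ k) a = c"
proof -
  have u: "u < n" "snd a \<in> {..<n} - {u}" "snd c \<in> {..<n} - {u}" "fst a = u" "fst c = u"
    using assms(2,3) by (auto simp: out_arcs_def arcs_def)
  moreover have "\<forall>v \<in> {..<n} - {u}. \<forall>w \<in> {..<n} - {u}. \<exists>k. (r u ^^ k) v = w"
    using assms(1) u(1) unfolding rotation_system_def by blast
  ultimately obtain k where "(r u ^^ k) (snd a) = snd c" by blast
  then have "(rot r ^^ k) (fst a, snd a) = c" using u by (simp add: rot_funpow prod_eq_iff)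
  then show ?thesis by (intro that) simp
qed

lemma funpow_semiconj_on:
  assumes "\<forall>x\<in>A. g x \<in> A" "\<forall>x\<in>A. h (g x) = f (h x)" "x \<in> A"
  shows "(f ^^ k) (h x) = h ((g ^^ k) x)"
proof -
  have "(g ^^ k) x \<in> A \<and> (f ^^ k) (h x) = h ((g ^^ k) x)"
    by (induction k) (use assms in auto)
  then show ?thesis ..
qed

lemma funpow_semiconj_inverse_on:
  assumes "\<forall>x\<in>A. g x \<in> A" "\<forall>x\<in>A. f (h (g x)) = h x" "x \<in> A"
  shows "(f ^^ k) (h ((g ^^ k) x)) = h x"
proof -
  have "(g ^^ k) x \<in> A \<and> (f ^^ k) (h ((g ^^ k) x)) = h x"
  proof (induction k)
    case (Suc k)
    have "(f ^^ Suc k) (h ((g ^^ Suc k) x)) = (f ^^ k) (f (h (g ((g ^^ k) x))))"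
      by (simp add: funpow_swap1)
    also have "\<dots> = h x" using Suc assms(2) by simp
    finally show ?case using Suc assms(1) by simp
  qed (use assms in simp)
  then show ?thesis ..
qed

lemma face_of_subset:
  assumes "x \<in> A" "\<forall>y\<in>A. face_succ r y \<in> A"
  shows "face_of r x \<subseteq> A"
proof -
  have "(face_succ r ^^ k) x \<in> A" for k
    by (induction k) (use assms in auto)
  then show ?thesis by (auto simp: face_of_def)
qed

text \<open>A duality h carries the rotation at a vertex to a facial walk (or its reverse),
  so every face is the h-image of the arcs leaving one vertex.\<close>

lemma face_of_self_duality:
  assumes rs: "rotation_system n r" and c: "c \<in> arcs n"
    and H: "(\<forall>a \<in> arcs n. h (rot r a) = face_succ r (h a)) \<or>
            (\<forall>a \<in> arcs n. face_succ r (h (rot r a)) = h a)"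
  shows "face_of r (h c) = h ` out_arcs n (fst c)"
proof
  let ?A = "out_arcs n (fst c)"
  have c': "c \<in> ?A" using c by (simp add: out_arcs_def)
  have A_arcs: "?A \<subseteq> arcs n" by (auto simp: out_arcs_def)
  have rot_A: "\<forall>a\<in>?A. rot r a \<in> ?A" using rot_in_out_arcs[OF rs] by blast
  show "face_of r (h c) \<subseteq> h ` ?A"
  proof (rule face_of_subset)
    show "\<forall>y\<in>h ` ?A. face_succ r y \<in> h ` ?A"
    proof
      fix y assume "y \<in> h ` ?A"
      then obtain a where a: "a \<in> ?A" "y = h a" by blast
      obtain a' where a': "a' \<in> ?A" "rot r a' = a" using rot_surj_on_out_arcs[OF rs a(1)] .
      have "a \<in> arcs n" "a' \<in> arcs n" using a(1) a'(1) A_arcs by auto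
      from H have "face_succ r (h a) = h (rot r a) \<or> face_succ r (h a) = h a'"
        using a' \<open>a \<in> arcs n\<close> \<open>a' \<in> arcs n\<close> by auto
      then show "face_succ r y \<in> h ` ?A"
        using a a'(1) rot_A by auto
    qed
  qed (use c' in simp)
  show "h ` ?A \<subseteq> face_of r (h c)"
  proof
    fix y assume "y \<in> h ` ?A"
    then obtain a where a: "a \<in> ?A" "y = h a" by blast
    from H have "\<exists>k. (face_succ r ^^ k) (h c) = h a"
    proof
      assume "\<forall>a \<in> arcs n. h (rot r a) = face_succ r (h a)"
      then have "\<forall>a\<in>?A. h (rot r a) = face_succ r (h a)" using A_arcs by blast
      moreover obtain k where "(rot r ^^ k) c = a" using rot_transitive_on_out_arcs[OF rs c' a(1)] .
      ultimately show ?thesis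
        using funpow_semiconj_on[OF rot_A _ c', of h "face_succ r" k] by auto
    next
      assume "\<forall>a \<in> arcs n. face_succ r (h (rot r a)) = h a"
      then have "\<forall>a\<in>?A. face_succ r (h (rot r a)) = h a" using A_arcs by blast
      moreover obtain k where "(rot r ^^ k) a = c" using rot_transitive_on_out_arcs[OF rs a(1) c'] .
      ultimately show ?thesis
        using funpow_semiconj_inverse_on[OF rot_A _ a(1), of "face_succ r" h k] by auto
    qed
    then obtain k where "(face_succ r ^^ k) (h c) = h a" ..
    then have "y = (face_succ r ^^ k) (h c)" using a(2) by simp
    then show "y \<in> face_of r (h c)" unfolding face_of_def by blast
  qed
qed

lemma self_dual_faces:
  assumes rs: "rotation_system n r" and sd: "self_dual n r"
  shows "\<forall>a\<in>arcs n. \<exists>!F. F \<in> faces n r \<and> a \<in> F"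
    and "\<forall>F\<in>faces n r. n - 1 \<le> card (F \<inter> arcs n)"
proof -
  obtain h where hb: "bij_betw h (arcs n) (arcs n)"
    and H: "(\<forall>a \<in> arcs n. h (rot r a) = face_succ r (h a)) \<or>
            (\<forall>a \<in> arcs n. face_succ r (h (rot r a)) = h a)"
    using sd unfolding self_dual_def by blast
  have him: "h ` arcs n = arcs n" and hinj: "inj_on h (arcs n)"
    using hb by (auto simp: bij_betw_def)
  have faces_eq: "faces n r = (\<lambda>c. h ` out_arcs n (fst c)) ` arcs n"
    unfolding faces_def by (subst him[symmetric]) (auto simp: image_image face_of_self_duality[OF rs _ H])
  have out_sub: "out_arcs n u \<subseteq> arcs n" for u by (auto simp: out_arcs_def)
  show "\<forall>a\<in>arcs n. \<exists>!F. F \<in> faces n r \<and> a \<in> F"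
  proof
    fix a assume "a \<in> arcs n"
    then obtain c where c: "c \<in> arcs n" "a = h c" using him by force
    show "\<exists>!F. F \<in> faces n r \<and> a \<in> F"
    proof (rule ex1I[of _ "h ` out_arcs n (fst c)"])
      show "h ` out_arcs n (fst c) \<in> faces n r \<and> a \<in> h ` out_arcs n (fst c)"
        using c faces_eq by (auto simp: out_arcs_def)
      fix F assume F: "F \<in> faces n r \<and> a \<in> F"
      then obtain d d' where "d \<in> arcs n" "F = h ` out_arcs n (fst d)"
        "d' \<in> out_arcs n (fst d)" "a = h d'"
        using faces_eq by auto
      moreover have "d' = c"
        using inj_onD[OF hinj] c calculation out_sub by blast
      ultimately show "F = h ` out_arcs n (fst c)" by (auto simp: out_arcs_def)
    qed
  qed
  show "\<forall>F\<in>faces n r. n - 1 \<le> card (F \<inter> arcs n)"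
  proof
    fix F assume "F \<in> faces n r"
    then obtain c where c: "c \<in> arcs n" "F = h ` out_arcs n (fst c)" using faces_eq by auto
    then have "F \<inter> arcs n = h ` out_arcs n (fst c)" using him out_sub by blast
    then have "card (F \<inter> arcs n) = card (out_arcs n (fst c))"
      using card_image[OF inj_on_subset[OF hinj out_sub]] by simp
    moreover have "fst c < n" using c(1) by (auto simp: arcs_def)
    ultimately show "n - 1 \<le> card (F \<inter> arcs n)" by (simp add: card_out_arcs)
  qed
qed

lemma tail_blocks:
  shows "\<forall>a\<in>arcs n. \<exists>!v. v \<in> {..<n} \<and> a \<in> {a. tail a = v}"
    and "\<forall>v\<in>{..<n}. n - 1 \<le> card ({a. tail a = v} \<inter> arcs n)"
proof -
  show "\<forall>a\<in>arcs n. \<exists>!v. v \<in> {..<n} \<and> a \<in> {a. tail a = v}"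
    by (auto simp: arcs_def tail_def)
  have "{a. tail a = v} \<inter> arcs n = out_arcs n v" for v
    by (auto simp: out_arcs_def tail_def)
  then show "\<forall>v\<in>{..<n}. n - 1 \<le> card ({a. tail a = v} \<inter> arcs n)"
    by (simp add: card_out_arcs)
qed

lemma entry_bounded_vf_transition_power:
  assumes rs: "rotation_system n r" and sd: "self_dual n r" and n: "n \<ge> 2"
  shows "entry_bounded (arcs n) (\<lambda>a b. mpow (arcs n) (vf_transition n r) t a b - idm a b)
           (10 ^ t * (8 / real (n - 1)))"
proof -
  let ?S = "arcs n"
  let ?PF = "block_projection ?S (faces n r) (\<lambda>F. F)"
  let ?PV = "block_projection ?S {..<n} (\<lambda>v. {a. tail a = v})"
  have m: "n - 1 > 0" using n by simp
  have fF: "finite (faces n r)" by (simp add: faces_def finite_arcs)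
  note PF = block_projection_bounds[OF finite_arcs fF self_dual_faces(1)[OF rs sd] m self_dual_faces(2)[OF rs sd]]
  note PV = block_projection_bounds[OF finite_arcs finite_lessThan tail_blocks(1) m tail_blocks(2)]
  have U_col: "col_sum_bounded ?S (vf_transition n r) (3 * 3)"
    unfolding vf_transition_eq
    using col_sum_bounded_mmult[OF col_sum_bounded_reflection[OF finite_arcs PF(2)]
        col_sum_bounded_reflection[OF finite_arcs PV(2)]] by simp
  have U_entry: "entry_bounded ?S (\<lambda>a b. vf_transition n r a b - idm a b) (8 * (1 / real (n - 1)))"
    unfolding vf_transition_eq by (rule entry_bounded_reflections_minus_idm[OF finite_arcs PF(1) PV])
  show ?thesis
    using entry_bounded_mpow_minus_idm[OF finite_arcs U_col _ U_entry] by simp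
qed

lemma mixing_minus_idm_less:
  assumes rs: "rotation_system n r" and sd: "self_dual n r" and e: "\<epsilon> > 0"
    and large: "24 * 10 ^ t / \<epsilon> + 8 * 10 ^ t < real n - 1"
    and ab: "a \<in> arcs n" "b \<in> arcs n"
  shows "cmod (mixing n r t a b - idm a b) < \<epsilon>"
proof -
  let ?d = "10 ^ t * (8 / real (n - 1))"
  have "24 * 10 ^ t / \<epsilon> \<ge> 0" "(10::real) ^ t \<ge> 0" using e by simp_all
  then have "real n > 1" using large by linarith
  then have n: "n \<ge> 2" and n1: "real (n - 1) = real n - 1" by (simp_all add: of_nat_diff)
  have "cmod (mpow (arcs n) (vf_transition n r) t a b - idm a b) \<le> ?d"
    using entry_bounded_vf_transition_power[OF rs sd n] ab by (simp add: entry_bounded_def)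
  moreover have "?d \<le> 1"
    using large \<open>24 * 10 ^ t / \<epsilon> \<ge> 0\<close> n by (simp add: n1 field_simps)
  ultimately have "cmod (mixing n r t a b - idm a b) \<le> 3 * ?d"
    unfolding mixing_def Let_def by (rule norm_mult_cnj_minus_idm)
  also have "\<dots> < \<epsilon>"
  proof -
    have "24 * 10 ^ t / \<epsilon> < real (n - 1)"
      using large \<open>(10::real) ^ t \<ge> 0\<close> n1 by linarith
    then show ?thesis using e n by (simp add: field_simps)
  qed
  finally show ?thesis .
qed

theorem corollary7p2:
  "\<forall>t::nat. t \<ge> 1 \<longrightarrow> (\<forall>\<epsilon>>0::real. \<exists>N::nat. \<forall>n r. n \<ge> N \<and> primepow n \<and>
      rotation_system n r \<and> circular n r \<and> self_dual n r \<and> orientably_regular n r \<longrightarrow>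
      (\<forall>a \<in> arcs n. \<forall>b \<in> arcs n. cmod (mixing n r t a b - idm a b) < \<epsilon>))"
proof (intro allI impI)
  fix t :: nat and \<epsilon> :: real
  assume e: "\<epsilon> > 0"
  let ?c = "24 * 10 ^ t / \<epsilon> + 8 * 10 ^ t"
  have "?c < real n - 1" if "nat \<lceil>?c\<rceil> + 2 \<le> n" for n :: nat
    using that real_nat_ceiling_ge[of ?c] of_nat_mono[OF that, where 'a=real] by simp
  then show "\<exists>N. \<forall>n r. N \<le> n \<and> primepow n \<and> rotation_system n r \<and> circular n r \<and>
      self_dual n r \<and> orientably_regular n r \<longrightarrow>
      (\<forall>a\<in>arcs n. \<forall>b\<in>arcs n. cmod (mixing n r t a b - idm a b) < \<epsilon>)"
    using mixing_minus_idm_less[OF _ _ e] by blast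
qed

end
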